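(* Let $D_1$ and $D_2$ be two different subsets of $MB_Y$, each of which is a set of fair causal features (i.e. a feasible solution of the fair causal feature selection problem described in the context). Then $D_1 \cup D_2$ is again a causally fair solution, i.e. the predictor $Y'$ obtained by training a classifier on $D_1 \cup D_2$ is causally fair with respect to the sensitive variable $S$.
   Context: Setting: a dataset over a finite set of random variables $V = \{S\} \cup X \cup \{Y\}$, where $S$ is the sensitive variable, $X = \{X_1,\dots,X_n\}$ the non-sensitive features and $Y$ the class (label) variable. The joint distribution $P(V)$ together with a directed acyclic graph $G$ on $V$ forms a Bayesian network (each variable is independent of its non-descendants given its parents) that is faithful (a conditional independence holds in $P$ iff the corresponding d-separation holds in $G$). The Markov blanket $MB_W$ of a variable $W$ is the set of its parents, children, and the other parents of its children in $G$; $MB_Y \subseteq X$ and $MB_S$ denote the Markov blankets of $Y$ and $S$. Intervention $do(W=w)$ means setting $W$ to $w$ in the modified graph obtained from $G$ by deleting all edges into $W$. Classifier training on a feature set $T \subseteq V$ produces a new variable $Y'$ added to the causal graph as a child of all features in $T$, generated by the mechanism $P(Y' \mid T)$ derived from the observational distribution $P$. Causal (interventional) fairness: for a set $K \subseteq V \setminus \{S, Y'\}$, the predictor is $K$-fair if for every value $k$ of $K$ and every outcome $o$, $\Pr(Y'=o \mid do(S=0), do(K=k)) = \Pr(Y'=o \mid do(S=1), do(K=k))$; it is causally fair if it is $K$-fair for every such $K$ (graphically, $S$ is d-separated from $Y'$ given $K$ in the graph where the edges from $S$ into $K$ are removed). A set $T$ is a set of fair causal features if the predictor $Y'$ trained on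 $T$ is causally fair and $T \subseteq MB_Y$ (so its features have an explainable causal relation with $Y$). The fair causal feature selection problem asks for the largest subset $T \subseteq MB_Y$ that is a set of fair causal features. *)

theory Defs
  imports Main
begin

text \<open>Causal graphs are DAGs given by a finite vertex set V and an edge relation E
  (an edge (a,b) means a \<rightarrow> b).\<close>

definition dag :: "'v set \<Rightarrow> ('v \<times> 'v) set \<Rightarrow> bool" where
  "dag V E \<longleftrightarrow> finite V \<and> E \<subseteq> V \<times> V \<and> acyclic E"

definition adj :: "('v \<times> 'v) set \<Rightarrow> 'v \<Rightarrow> 'v \<Rightarrow> bool" where
  "adj E a b \<longleftrightarrow> (a, b) \<in> E \<or> (b, a) \<in> E"

definition is_path :: "('v \<times> 'v) set \<Rightarrow> 'v list \<Rightarrow> bool" where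
  "is_path E p \<longleftrightarrow> length p \<ge> 2 \<and> distinct p \<and>
     (\<forall>i. Suc i < length p \<longrightarrow> adj E (p ! i) (p ! Suc i))"

definition collider :: "('v \<times> 'v) set \<Rightarrow> 'v list \<Rightarrow> nat \<Rightarrow> bool" where
  "collider E p i \<longleftrightarrow> (p ! (i - 1), p ! i) \<in> E \<and> (p ! Suc i, p ! i) \<in> E"

definition active_path :: "('v \<times> 'v) set \<Rightarrow> 'v set \<Rightarrow> 'v list \<Rightarrow> bool" where
  "active_path E Z p \<longleftrightarrow>
     (\<forall>i. 0 < i \<and> Suc i < length p \<longrightarrow>
        (if collider E p i then (\<exists>d. (p ! i, d) \<in> E\<^sup>* \<and> d \<in> Z) else p ! i \<notin> Z))"

definition d_separated :: "('v \<times> 'v) set \<Rightarrow> 'v \<Rightarrow> 'v \<Rightarrow> 'v set \<Rightarrow> bool" where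
  "d_separated E x y Z \<longleftrightarrow>
     \<not> (\<exists>p. is_path E p \<and> hd p = x \<and> last p = y \<and> active_path E Z p)"

definition markov_blanket :: "('v \<times> 'v) set \<Rightarrow> 'v \<Rightarrow> 'v set" where
  "markov_blanket E w =
     {p. (p, w) \<in> E} \<union> {c. (w, c) \<in> E} \<union> {q. q \<noteq> w \<and> (\<exists>c. (w, c) \<in> E \<and> (q, c) \<in> E)}"

text \<open>Graph after training a classifier on T: new vertex Yp (= Y') becomes a child of all of T.\<close>
definition train_edges :: "('v \<times> 'v) set \<Rightarrow> 'v set \<Rightarrow> 'v \<Rightarrow> ('v \<times> 'v) set" where
  "train_edges E T Yp = E \<union> {(t, Yp) | t. t \<in> T}"

definition causally_fair :: "'v set \<Rightarrow> ('v \<times> 'v) set \<Rightarrow> 'v \<Rightarrow> 'v \<Rightarrow> 'v set \<Rightarrow> bool" where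
  "causally_fair V E S Yp T \<longleftrightarrow>
     (\<forall>K. K \<subseteq> (V \<union> {Yp}) - {S, Yp} \<longrightarrow>
        d_separated (train_edges E T Yp - {(S, k) | k. k \<in> K}) S Yp K)"

definition fair_causal_features ::
  "'v set \<Rightarrow> ('v \<times> 'v) set \<Rightarrow> 'v \<Rightarrow> 'v \<Rightarrow> 'v \<Rightarrow> 'v set \<Rightarrow> bool" where
  "fair_causal_features V E S Y Yp T \<longleftrightarrow>
     causally_fair V E S Yp T \<and> T \<subseteq> markov_blanket E Y"

end

theory Submission
  imports Defs
begin

text \<open>Training only adds edges into the fresh vertex Y', which is a sink. A d-connecting
  path from S to Y' in the graph trained on \<open>\<Union>\<D>\<close> therefore ends with an edge t \<rightarrow> Y' with
  t in some feature set D of the family, and all its other edges, as well as every directed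
  path from a collider to a vertex of K (which never passes through the sink Y'), are edges
  of the original graph. So the same path is d-connecting in the graph trained on D alone.\<close>

lemma nth_neq_last_if_distinct:
  assumes "distinct xs" and "Suc j < length xs"
  shows "xs ! j \<noteq> last xs"
proof -
  have "xs \<noteq> []"
    using assms(2) by auto
  then have "last xs = xs ! (length xs - 1)"
    by (rule last_conv_nth)
  with assms show ?thesis by (simp add: nth_eq_iff_index_eq)
qed

lemma nth_Suc_length_minus_2:
  assumes "length xs \<ge> 2"
  shows "xs ! Suc (length xs - 2) = last xs"
proof -
  have "xs \<noteq> []" and "Suc (length xs - 2) = length xs - 1"
    using assms by auto
  then show ?thesis by (simp add: last_conv_nth)
qed

lemma rtrancl_restrict_avoiding_sink:
  assumes sink: "\<And>x. (y, x) \<notin> G"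
    and keep: "\<And>a b. (a, b) \<in> G \<Longrightarrow> b \<noteq> y \<Longrightarrow> (a, b) \<in> G'"
    and "(a, d) \<in> G\<^sup>*" and "d \<noteq> y"
  shows "(a, d) \<in> G'\<^sup>*"
  using assms(3,4)
proof (induction rule: converse_rtrancl_induct)
  case base
  then show ?case by simp
next
  case (step a z)
  have "z \<noteq> y"
    using step.hyps(2) step.prems sink by (metis converse_rtranclE)
  with step keep show ?case
    by (meson converse_rtrancl_into_rtrancl)
qed

lemma is_path_last_edge_into_sink:
  assumes "is_path G p" and "last p = y" and "\<And>x. (y, x) \<notin> G"
  shows "(p ! (length p - 2), y) \<in> G"
proof -
  have len: "length p \<ge> 2" and "adj G (p ! (length p - 2)) (p ! Suc (length p - 2))"
    using assms(1) unfolding is_path_def by auto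
  moreover have "p ! Suc (length p - 2) = y"
    using len assms(2) nth_Suc_length_minus_2 by blast
  ultimately show ?thesis
    using assms(3) unfolding adj_def by auto
qed

lemma is_path_restrict_to_sink:
  assumes path: "is_path G p" and last: "last p = y"
    and keep: "\<And>a b. (a, b) \<in> G \<Longrightarrow> b \<noteq> y \<Longrightarrow> (a, b) \<in> G'"
    and last_edge: "(p ! (length p - 2), y) \<in> G'"
  shows "is_path G' p"
proof -
  have len: "length p \<ge> 2" and dist: "distinct p"
    and adj: "\<And>i. Suc i < length p \<Longrightarrow> adj G (p ! i) (p ! Suc i)"
    using path unfolding is_path_def by auto
  have "adj G' (p ! i) (p ! Suc i)" if i: "Suc i < length p" for i
  proof (cases "Suc i = length p - 1")
    case True
    then have i_last: "i = length p - 2"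
      by simp
    then have "p ! Suc i = y"
      using len last nth_Suc_length_minus_2 by blast
    with i_last last_edge show ?thesis unfolding adj_def by simp
  next
    case False
    then have "Suc (Suc i) < length p"
      using i by linarith
    then have "p ! i \<noteq> y" and "p ! Suc i \<noteq> y"
      using dist last nth_neq_last_if_distinct[of p] by (simp_all add: Suc_lessD)
    with adj[OF i] keep show ?thesis unfolding adj_def by blast
  qed
  with len dist show ?thesis unfolding is_path_def by blast
qed

lemma active_path_restrict_to_sink:
  assumes sub: "G' \<subseteq> G" and sink: "\<And>x. (y, x) \<notin> G"
    and keep: "\<And>a b. (a, b) \<in> G \<Longrightarrow> b \<noteq> y \<Longrightarrow> (a, b) \<in> G'"
    and dist: "distinct p" and last: "last p = y" and "y \<notin> K"
    and active: "active_path G K p"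
  shows "active_path G' K p"
  unfolding active_path_def
proof (intro allI impI)
  fix i
  assume i: "0 < i \<and> Suc i < length p"
  then have "p ! i \<noteq> y"
    using dist last nth_neq_last_if_distinct by auto
  then have collider_iff: "collider G' p i \<longleftrightarrow> collider G p i"
    using sub keep unfolding collider_def by blast
  have descend: "(p ! i, d) \<in> G'\<^sup>*" if "(p ! i, d) \<in> G\<^sup>*" and "d \<in> K" for d
    using rtrancl_restrict_avoiding_sink[OF sink keep] that \<open>y \<notin> K\<close> by blast
  from active i
  have "if collider G p i then \<exists>d. (p ! i, d) \<in> G\<^sup>* \<and> d \<in> K else p ! i \<notin> K"
    unfolding active_path_def by blast
  with collider_iff descend
  show "if collider G' p i then \<exists>d. (p ! i, d) \<in> G'\<^sup>* \<and> d \<in> K else p ! i \<notin> K"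
    by (auto split: if_splits)
qed

lemma causally_fair_Union:
  assumes fresh: "Yp \<notin> Field E" "Yp \<notin> \<Union>\<D>"
    and fair: "\<And>D. D \<in> \<D> \<Longrightarrow> causally_fair V E S Yp D"
  shows "causally_fair V E S Yp (\<Union>\<D>)"
  unfolding causally_fair_def d_separated_def
proof (intro allI impI notI)
  fix K
  assume K: "K \<subseteq> (V \<union> {Yp}) - {S, Yp}"
  define R where "R = {(S, k) | k. k \<in> K}"
  define G where "G = train_edges E (\<Union>\<D>) Yp - R"
  assume "\<exists>p. is_path (train_edges E (\<Union>\<D>) Yp - {(S, k) | k. k \<in> K}) p \<and> hd p = S \<and>
    last p = Yp \<and> active_path (train_edges E (\<Union>\<D>) Yp - {(S, k) | k. k \<in> K}) K p"
  then obtain p where path: "is_path G p" and "hd p = S" and last: "last p = Yp"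
    and active: "active_path G K p"
    unfolding G_def R_def by blast
  have sink: "(Yp, x) \<notin> G" for x
    using fresh unfolding G_def train_edges_def by (auto simp: Field_def)
  define t where "t = p ! (length p - 2)"
  have "(t, Yp) \<in> G"
    unfolding t_def using is_path_last_edge_into_sink[OF path last] sink by blast
  then obtain D where "D \<in> \<D>" and "t \<in> D"
    using fresh unfolding G_def train_edges_def by (auto simp: Field_def)
  define G' where "G' = train_edges E D Yp - R"
  have sub: "G' \<subseteq> G"
    using \<open>D \<in> \<D>\<close> unfolding G'_def G_def train_edges_def by blast
  have keep: "(a, b) \<in> G'" if "(a, b) \<in> G" and "b \<noteq> Yp" for a b
    using that unfolding G'_def G_def train_edges_def by blast
  have "(t, Yp) \<in> G'"
    using \<open>(t, Yp) \<in> G\<close> \<open>t \<in> D\<close> unfolding G'_def G_def train_edges_def by blast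
  then have "is_path G' p"
    using is_path_restrict_to_sink[OF path last keep] unfolding t_def by blast
  moreover have "active_path G' K p"
    using active_path_restrict_to_sink[OF sub sink keep _ last _ active] path K
    unfolding is_path_def by blast
  moreover have "d_separated G' S Yp K"
    using fair[OF \<open>D \<in> \<D>\<close>] K unfolding causally_fair_def G'_def R_def by blast
  ultimately show False
    using \<open>hd p = S\<close> last unfolding d_separated_def by blast
qed

theorem lemma1:
  fixes V :: "'v set" and E :: "('v \<times> 'v) set" and S Y Yp :: 'v and D1 D2 :: "'v set"
  assumes "dag V E"
    and "S \<in> V" and "Y \<in> V" and "S \<noteq> Y"
    and "Yp \<notin> V"
    and "markov_blanket E Y \<subseteq> V - {S, Y}"
    and "D1 \<noteq> D2"
    and "fair_causal_features V E S Y Yp D1"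
    and "fair_causal_features V E S Y Yp D2"
  shows "causally_fair V E S Yp (D1 \<union> D2)"
proof -
  have "Field E \<subseteq> V"
    using \<open>dag V E\<close> unfolding dag_def Field_def by blast
  moreover have "D1 \<union> D2 \<subseteq> V"
    using assms(6,8,9) unfolding fair_causal_features_def by blast
  ultimately have "Yp \<notin> Field E" and "Yp \<notin> \<Union>{D1, D2}"
    using \<open>Yp \<notin> V\<close> by auto
  moreover have "causally_fair V E S Yp D" if "D \<in> {D1, D2}" for D
    using that assms(8,9) unfolding fair_causal_features_def by blast
  ultimately show ?thesis
    using causally_fair_Union[of Yp E "{D1, D2}" V S] by simp
qed

end
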